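(* For all matches $(p,\sigma)$ and $(q,\rho)$ with $p,\sigma\sqsubseteq q,\rho$, and for every substitution $\theta$, it holds that $p,\theta[\sigma]\sqsubseteq q,\theta[\rho]$.
   Context: CPC patterns over a countable set of names: $p ::= \lambda x \mid x \mid \ulcorner x\urcorner \mid p\bullet p$ (binding name, variable name, protected name, compound). ${\sf bn}(p)$, ${\sf vn}(p)$, ${\sf pn}(p)$ are the sets of binding, variable and protected names of $p$; ${\sf fn}(p)={\sf vn}(p)\cup{\sf pn}(p)$. Patterns are well formed (binding names pairwise distinct and distinct from free names). Communicable patterns contain no protected or binding names; protection extends to them by $\ulcorner p\bullet q\urcorner=\ulcorner p\urcorner\bullet\ulcorner q\urcorner$. A substitution is a finite partial function from names to communicable patterns, applied to patterns by $\sigma x=\sigma(x)$ if $x\in{\sf dom}(\sigma)$ else $x$; $\sigma\ulcorner x\urcorner=\ulcorner\sigma(x)\urcorner$ if $x\in{\sf dom}(\sigma)$ else $\ulcorner x\urcorner$; $\sigma(\lambda x)=\lambda x$; $\sigma(p\bullet q)=\sigma p\bullet\sigma q$. $\hat\sigma$ acts by $\hat\sigma x=x$, $\hat\sigma\ulcorner x\urcorner=\ulcorner x\urcorner$, $\hat\sigma(\lambda x)=\sigma(x)$ if $x\in{\sf dom}(\sigma)$ else $\lambda x$, $\hat\sigma(p\bullet q)=\hat\sigma p\bullet\hat\sigma q$. For substitutions $\theta,\sigma$, $\theta[\sigma]$ is the substitution with domain ${\sf dom}(\sigma)$ mapping each $x$ to $\theta(\sigma(x))$. A match $(p,\sigma)$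 is a pattern $p$ and substitution $\sigma$ with ${\sf dom}(\sigma)={\sf bn}(p)$. Compatibility $p,\sigma\sqsubseteq q,\rho$ is the least relation between matches with: $p,\sigma\sqsubseteq\lambda y,\{\hat\sigma p/y\}$ if ${\sf fn}(p)=\emptyset$; $n,\{\}\sqsubseteq n,\{\}$; $\ulcorner n\urcorner,\{\}\sqsubseteq\ulcorner n\urcorner,\{\}$; $\ulcorner n\urcorner,\{\}\sqsubseteq n,\{\}$; $p_1\bullet p_2,\sigma_1\cup\sigma_2\sqsubseteq q_1\bullet q_2,\rho_1\cup\rho_2$ if $p_i,\sigma_i\sqsubseteq q_i,\rho_i$ for $i=1,2$. *)

theory Defs
  imports Main
begin

datatype 'n pat =
    Bind 'n
  | Var 'n
  | Prot 'n
  | Comp "'n pat" "'n pat"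

fun bns :: "'n pat \<Rightarrow> 'n list" where
  "bns (Bind x) = [x]"
| "bns (Var x) = []"
| "bns (Prot x) = []"
| "bns (Comp p q) = bns p @ bns q"

definition bn :: "'n pat \<Rightarrow> 'n set" where
  "bn p = set (bns p)"

fun vn :: "'n pat \<Rightarrow> 'n set" where
  "vn (Bind x) = {}"
| "vn (Var x) = {x}"
| "vn (Prot x) = {}"
| "vn (Comp p q) = vn p \<union> vn q"

fun pn :: "'n pat \<Rightarrow> 'n set" where
  "pn (Bind x) = {}"
| "pn (Var x) = {}"
| "pn (Prot x) = {x}"
| "pn (Comp p q) = pn p \<union> pn q"

definition fn :: "'n pat \<Rightarrow> 'n set" where
  "fn p = vn p \<union> pn p"

definition wf_pat :: "'n pat \<Rightarrow> bool" where
  "wf_pat p \<longleftrightarrow> distinct (bns p) \<and> bn p \<inter> fn p = {}"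

fun communicable :: "'n pat \<Rightarrow> bool" where
  "communicable (Bind x) = False"
| "communicable (Var x) = True"
| "communicable (Prot x) = False"
| "communicable (Comp p q) = (communicable p \<and> communicable q)"

fun prot :: "'n pat \<Rightarrow> 'n pat" where
  "prot (Var x) = Prot x"
| "prot (Comp p q) = Comp (prot p) (prot q)"
| "prot (Bind x) = Bind x"
| "prot (Prot x) = Prot x"

type_synonym 'n subst = "'n \<Rightarrow> 'n pat option"

definition is_subst :: "'n subst \<Rightarrow> bool" where
  "is_subst \<sigma> \<longleftrightarrow> finite (dom \<sigma>) \<and> (\<forall>t \<in> ran \<sigma>. communicable t)"

fun subst_app :: "'n subst \<Rightarrow> 'n pat \<Rightarrow> 'n pat" where
  "subst_app \<sigma> (Var x) = (case \<sigma> x of Some t \<Rightarrow> t | None \<Rightarrow> Var x)"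
| "subst_app \<sigma> (Prot x) = (case \<sigma> x of Some t \<Rightarrow> prot t | None \<Rightarrow> Prot x)"
| "subst_app \<sigma> (Bind x) = Bind x"
| "subst_app \<sigma> (Comp p q) = Comp (subst_app \<sigma> p) (subst_app \<sigma> q)"

fun subst_hat :: "'n subst \<Rightarrow> 'n pat \<Rightarrow> 'n pat" where
  "subst_hat \<sigma> (Var x) = Var x"
| "subst_hat \<sigma> (Prot x) = Prot x"
| "subst_hat \<sigma> (Bind x) = (case \<sigma> x of Some t \<Rightarrow> t | None \<Rightarrow> Bind x)"
| "subst_hat \<sigma> (Comp p q) = Comp (subst_hat \<sigma> p) (subst_hat \<sigma> q)"

text \<open>Composition \<theta>[\<sigma>]: domain dom \<sigma>, x \<mapsto> \<theta>(\<sigma>(x)).\<close>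
definition subst_comp :: "'n subst \<Rightarrow> 'n subst \<Rightarrow> 'n subst" where
  "subst_comp \<theta> \<sigma> = (\<lambda>x. map_option (subst_app \<theta>) (\<sigma> x))"

definition is_match :: "'n pat \<Rightarrow> 'n subst \<Rightarrow> bool" where
  "is_match p \<sigma> \<longleftrightarrow> wf_pat p \<and> is_subst \<sigma> \<and> dom \<sigma> = bn p"

text \<open>For well-formed compounds the binding names of components are disjoint,
  so map_add (++) is the union of the two substitutions.\<close>
inductive compat :: "'n pat \<Rightarrow> 'n subst \<Rightarrow> 'n pat \<Rightarrow> 'n subst \<Rightarrow> bool" where
  compat_bind: "\<lbrakk> fn p = {}; is_match p \<sigma>; is_match (Bind y) [y \<mapsto> subst_hat \<sigma> p] \<rbrakk>
      \<Longrightarrow> compat p \<sigma> (Bind y) [y \<mapsto> subst_hat \<sigma> p]"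
| compat_var: "compat (Var n) Map.empty (Var n) Map.empty"
| compat_prot: "compat (Prot n) Map.empty (Prot n) Map.empty"
| compat_prot_var: "compat (Prot n) Map.empty (Var n) Map.empty"
| compat_comp: "\<lbrakk> compat p1 \<sigma>1 q1 \<rho>1; compat p2 \<sigma>2 q2 \<rho>2;
      is_match (Comp p1 p2) (\<sigma>1 ++ \<sigma>2); is_match (Comp q1 q2) (\<rho>1 ++ \<rho>2) \<rbrakk>
      \<Longrightarrow> compat (Comp p1 p2) (\<sigma>1 ++ \<sigma>2) (Comp q1 q2) (\<rho>1 ++ \<rho>2)"

end

theory Submission
  imports Defs
begin

text \<open>Post-composition with \<open>\<theta>\<close> keeps the domain of a
  substitution, preserves matches, distributes over the union of substitutions, and commutes
  with the hat action on patterns without free names: \<open>\<theta>(hat \<sigma> p) = hat (\<theta>[\<sigma>]) p\<close>. Hence every rule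
  instance for \<open>\<sigma>, \<rho>\<close> becomes a rule instance for \<open>\<theta>[\<sigma>], \<theta>[\<rho>]\<close>.\<close>

lemma communicable_subst_app:
  assumes "communicable t" and "is_subst \<theta>"
  shows "communicable (subst_app \<theta> t)"
  using assms
proof (induction t)
  case (Var x)
  then show ?case
    by (cases "\<theta> x") (auto simp: is_subst_def ran_def)
qed auto

lemma dom_subst_comp [simp]: "dom (subst_comp \<theta> \<sigma>) = dom \<sigma>"
  by (auto simp: subst_comp_def)

lemma is_subst_subst_comp:
  assumes "is_subst \<sigma>" and "is_subst \<theta>"
  shows "is_subst (subst_comp \<theta> \<sigma>)"
proof -
  have "communicable t" if "t \<in> ran (subst_comp \<theta> \<sigma>)" for t
    using that assms communicable_subst_app
    by (fastforce simp: is_subst_def subst_comp_def ran_def)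
  then show ?thesis
    using assms by (simp add: is_subst_def)
qed

lemma is_match_subst_comp:
  assumes "is_match p \<sigma>" and "is_subst \<theta>"
  shows "is_match p (subst_comp \<theta> \<sigma>)"
  using assms by (simp add: is_match_def is_subst_subst_comp)

lemma subst_comp_map_add:
  "subst_comp \<theta> (\<sigma>1 ++ \<sigma>2) = subst_comp \<theta> \<sigma>1 ++ subst_comp \<theta> \<sigma>2"
  by (rule ext) (auto simp: subst_comp_def map_add_def split: option.splits)

lemma subst_comp_empty [simp]: "subst_comp \<theta> Map.empty = Map.empty"
  by (simp add: subst_comp_def)

lemma subst_comp_singleton: "subst_comp \<theta> [y \<mapsto> t] = [y \<mapsto> subst_app \<theta> t]"
  by (rule ext) (simp add: subst_comp_def)

lemma subst_app_subst_hat: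
  assumes "fn p = {}"
  shows "subst_app \<theta> (subst_hat \<sigma> p) = subst_hat (subst_comp \<theta> \<sigma>) p"
  using assms
proof (induction p)
  case (Bind x)
  then show ?case
    by (cases "\<sigma> x") (auto simp: subst_comp_def)
qed (auto simp: fn_def)

lemma compat_subst_comp:
  assumes "compat p \<sigma> q \<rho>" and "is_subst \<theta>"
  shows "compat p (subst_comp \<theta> \<sigma>) q (subst_comp \<theta> \<rho>)"
  using assms
proof (induction rule: compat.induct)
  case (compat_bind p \<sigma> y)
  let ?t = "subst_hat (subst_comp \<theta> \<sigma>) p"
  have closed: "subst_comp \<theta> [y \<mapsto> subst_hat \<sigma> p] = [y \<mapsto> ?t]"
    using compat_bind.hyps(1) by (simp add: subst_comp_singleton subst_app_subst_hat)
  have "is_match p (subst_comp \<theta> \<sigma>)"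
    using compat_bind.hyps(2) compat_bind.prems by (rule is_match_subst_comp)
  moreover have "is_match (Bind y) [y \<mapsto> ?t]"
    using is_match_subst_comp[OF compat_bind.hyps(3) compat_bind.prems] closed by simp
  ultimately show ?case
    unfolding closed using compat_bind.hyps(1) by (blast intro: compat.compat_bind)
next
  case (compat_comp p1 \<sigma>1 q1 \<rho>1 p2 \<sigma>2 q2 \<rho>2)
  have "is_match (Comp p1 p2) (subst_comp \<theta> \<sigma>1 ++ subst_comp \<theta> \<sigma>2)"
    and "is_match (Comp q1 q2) (subst_comp \<theta> \<rho>1 ++ subst_comp \<theta> \<rho>2)"
    using is_match_subst_comp[OF compat_comp.hyps(3) compat_comp.prems]
      is_match_subst_comp[OF compat_comp.hyps(4) compat_comp.prems]
    by (simp_all add: subst_comp_map_add)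
  with compat_comp.IH compat_comp.prems show ?case
    unfolding subst_comp_map_add by (blast intro: compat.compat_comp)
qed (auto intro: compat.intros)

theorem lemma3p16:
  fixes p q :: "'n pat" and \<sigma> \<rho> \<theta> :: "'n subst"
  assumes "is_match p \<sigma>" and "is_match q \<rho>"
    and "compat p \<sigma> q \<rho>"
    and "is_subst \<theta>"
  shows "compat p (subst_comp \<theta> \<sigma>) q (subst_comp \<theta> \<rho>)"
  using assms(3,4) by (rule compat_subst_comp)

end
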